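(* A map $f:\mathbb{X}\to\mathbb{Y}$ in $p\mathsf{Ch}^*_\mathbb{Q}$ has the right lifting property with respect to every map in $\mathbb{J}_0$ if and only if, for every $0\le s\le t<\infty$, the induced map $\mathbb{X}(s)\to\mathbb{X}(t)\times_{\mathbb{Y}(t)}\mathbb{Y}(s)$ is an epimorphism (degreewise surjective).
   Context: $p\mathsf{Ch}^*_\mathbb{Q}=\mathsf{Fun}([0,\infty),\mathsf{Ch}^*_\mathbb{Q})$, non-negatively graded rational cochain complexes with differential raising degree. For $k\ge1$, $D^k$ is the complex with $\mathbb{Q}$ in degrees $k-1$ and $k$ and identity differential; $D^0=0$. $\mathbb{D}^k_s$ is the persistent complex that is $0$ at $r<s$ and $D^k$ at $r\ge s$, with identity structure maps. $\mathbb{J}_0=\{\mathbb{D}^k_t\hookrightarrow\mathbb{D}^k_s : k\in\mathbb{N},\ 0\le s<t<\infty\}$ (the evident inclusions). The map $\mathbb{X}(s)\to\mathbb{X}(t)\times_{\mathbb{Y}(t)}\mathbb{Y}(s)$ is induced by the structure map $\mathbb{X}(s\le t)$ and $f(s)$. *)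

theory Defs
  imports Complex_Main
begin

class qvs = ab_group_add +
  fixes qscale :: "rat \<Rightarrow> 'a \<Rightarrow> 'a"
  assumes qscale_add_right: "qscale a (x + y) = qscale a x + qscale a y"
    and qscale_add_left: "qscale (a + b) x = qscale a x + qscale b x"
    and qscale_assoc: "qscale a (qscale b x) = qscale (a * b) x"
    and qscale_one: "qscale 1 x = x"

instantiation rat :: qvs
begin
definition qscale_rat :: "rat \<Rightarrow> rat \<Rightarrow> rat" where "qscale_rat a x = a * x"
instance by standard (auto simp: qscale_rat_def algebra_simps)
end

definition qsubspace :: "'v::qvs set \<Rightarrow> bool" where
  "qsubspace S \<longleftrightarrow> 0 \<in> S \<and> (\<forall>x\<in>S. \<forall>y\<in>S. x + y \<in> S) \<and> (\<forall>c. \<forall>x\<in>S. qscale c x \<in> S)"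

definition qlinear_on :: "'v::qvs set \<Rightarrow> ('v \<Rightarrow> 'w::qvs) \<Rightarrow> bool" where
  "qlinear_on A g \<longleftrightarrow> (\<forall>x\<in>A. \<forall>y\<in>A. g (x + y) = g x + g y) \<and>
                       (\<forall>c. \<forall>x\<in>A. g (qscale c x) = qscale c (g x))"

text \<open>Ambient type 'v; pC r n is the degree-n part of the complex at time r (a subspace),
  pd r n is the differential degree n to n+1 at time r, pstr s t n is the structure map
  from time s to time t in degree n.\<close>

record 'v pcx =
  pC :: "real \<Rightarrow> nat \<Rightarrow> 'v set"
  pd :: "real \<Rightarrow> nat \<Rightarrow> 'v \<Rightarrow> 'v"
  pstr :: "real \<Rightarrow> real \<Rightarrow> nat \<Rightarrow> 'v \<Rightarrow> 'v"

definition is_pcx :: "'v::qvs pcx \<Rightarrow> bool" where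
  "is_pcx X \<longleftrightarrow>
    (\<forall>r n. 0 \<le> r \<longrightarrow>
       qsubspace (pC X r n) \<and>
       pd X r n ` pC X r n \<subseteq> pC X r (Suc n) \<and>
       qlinear_on (pC X r n) (pd X r n) \<and>
       (\<forall>x\<in>pC X r n. pd X r (Suc n) (pd X r n x) = 0) \<and>
       (\<forall>x\<in>pC X r n. pstr X r r n x = x)) \<and>
    (\<forall>s t n. 0 \<le> s \<and> s \<le> t \<longrightarrow>
       pstr X s t n ` pC X s n \<subseteq> pC X t n \<and>
       qlinear_on (pC X s n) (pstr X s t n) \<and>
       (\<forall>x\<in>pC X s n. pstr X s t (Suc n) (pd X s n x) = pd X t n (pstr X s t n x))) \<and>
    (\<forall>s t u n. 0 \<le> s \<and> s \<le> t \<and> t \<le> u \<longrightarrow>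
       (\<forall>x\<in>pC X s n. pstr X t u n (pstr X s t n x) = pstr X s u n x))"

definition is_pmor :: "'v::qvs pcx \<Rightarrow> 'w::qvs pcx \<Rightarrow> (real \<Rightarrow> nat \<Rightarrow> 'v \<Rightarrow> 'w) \<Rightarrow> bool" where
  "is_pmor X Y g \<longleftrightarrow>
    (\<forall>r n. 0 \<le> r \<longrightarrow>
       g r n ` pC X r n \<subseteq> pC Y r n \<and>
       qlinear_on (pC X r n) (g r n) \<and>
       (\<forall>x\<in>pC X r n. g r (Suc n) (pd X r n x) = pd Y r n (g r n x))) \<and>
    (\<forall>s t n. 0 \<le> s \<and> s \<le> t \<longrightarrow>
       (\<forall>x\<in>pC X s n. g t n (pstr X s t n x) = pstr Y s t n (g s n x)))"

definition pmor_eq :: "'v pcx \<Rightarrow> (real \<Rightarrow> nat \<Rightarrow> 'v \<Rightarrow> 'w) \<Rightarrow> (real \<Rightarrow> nat \<Rightarrow> 'v \<Rightarrow> 'w) \<Rightarrow> bool" where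
  "pmor_eq X g h \<longleftrightarrow> (\<forall>r n. 0 \<le> r \<longrightarrow> (\<forall>x\<in>pC X r n. g r n x = h r n x))"

definition pcomp :: "(real \<Rightarrow> nat \<Rightarrow> 'b \<Rightarrow> 'c) \<Rightarrow> (real \<Rightarrow> nat \<Rightarrow> 'a \<Rightarrow> 'b) \<Rightarrow> (real \<Rightarrow> nat \<Rightarrow> 'a \<Rightarrow> 'c)" where
  "pcomp g h = (\<lambda>r n x. g r n (h r n x))"

definition has_rlp ::
  "'a::qvs pcx \<Rightarrow> 'b::qvs pcx \<Rightarrow> (real \<Rightarrow> nat \<Rightarrow> 'a \<Rightarrow> 'b) \<Rightarrow>
   'v::qvs pcx \<Rightarrow> 'w::qvs pcx \<Rightarrow> (real \<Rightarrow> nat \<Rightarrow> 'v \<Rightarrow> 'w) \<Rightarrow> bool" where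
  "has_rlp A B i X Y f \<longleftrightarrow>
    (\<forall>u v. is_pmor A X u \<and> is_pmor B Y v \<and> pmor_eq A (pcomp f u) (pcomp v i) \<longrightarrow>
       (\<exists>h. is_pmor B X h \<and> pmor_eq A (pcomp h i) u \<and> pmor_eq B (pcomp f h) v))"

text \<open>The disk D^k_s: zero before time s, D^k (Q in degrees k-1 and k, identity differential)
  from time s on, identity structure maps; D^0 = 0.\<close>

definition disk :: "nat \<Rightarrow> real \<Rightarrow> rat pcx" where
  "disk k s = \<lparr> pC = (\<lambda>r n. if s \<le> r \<and> 1 \<le> k \<and> (n + 1 = k \<or> n = k) then UNIV else {0}),
                pd = (\<lambda>r n x. if s \<le> r \<and> n + 1 = k then x else 0),
                pstr = (\<lambda>r r' n x. x) \<rparr>"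

text \<open>The evident inclusion D^k_t \<hookrightarrow> D^k_s (for s < t).\<close>

definition disk_incl :: "real \<Rightarrow> nat \<Rightarrow> rat \<Rightarrow> rat" where
  "disk_incl = (\<lambda>r n x. x)"

end

theory Submission
  imports Defs
begin

text \<open>The disk \<open>D\<^sup>n\<^sup>+\<^sup>1\<^sub>s\<close> is free on one generator in degree \<open>n\<close> at time \<open>s\<close>:
  morphisms \<open>D\<^sup>n\<^sup>+\<^sup>1\<^sub>s \<rightarrow> X\<close> correspond to elements of \<open>X(s)\<^sub>n\<close> (the image of the
  generator), and the inclusion \<open>D\<^sup>n\<^sup>+\<^sup>1\<^sub>t \<hookrightarrow> D\<^sup>n\<^sup>+\<^sup>1\<^sub>s\<close> corresponds to the structure map
  \<open>X(s)\<^sub>n \<rightarrow> X(t)\<^sub>n\<close>. Under this correspondence a lifting problem against that inclusion is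
  a pair \<open>(a, b) \<in> X(t)\<^sub>n \<times>\<^bsub>Y(t)\<^sub>n\<^esub> Y(s)\<^sub>n\<close>, and a lift is a preimage of it in \<open>X(s)\<^sub>n\<close>.
  The disks \<open>D\<^sup>0\<close> are zero, so lifting against them is trivial, and for \<open>s = t\<close> the
  map into the pullback is an isomorphism.\<close>

lemma qscale_zero_left [simp]: "qscale 0 x = (0::'a::qvs)"
proof -
  have "qscale (0 + 0) x = qscale 0 x + qscale 0 x" by (rule qscale_add_left)
  then show ?thesis by simp
qed

lemma qscale_zero_right [simp]: "qscale c (0::'a::qvs) = 0"
proof -
  have "qscale c (0 + 0) = qscale c 0 + qscale c (0::'a)" by (rule qscale_add_right)
  then show ?thesis by simp
qed

lemma qscale_rat_eq [simp]: "qscale c (q::rat) = c * q"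
  by (simp add: qscale_rat_def)

lemma qlinear_on_zero: "qlinear_on A g \<Longrightarrow> 0 \<in> A \<Longrightarrow> g 0 = 0"
  unfolding qlinear_on_def by (metis add_cancel_right_right)

lemma qlinear_on_qscale: "qlinear_on A g \<Longrightarrow> x \<in> A \<Longrightarrow> g (qscale c x) = qscale c (g x)"
  unfolding qlinear_on_def by blast

context
  fixes X :: "'v::qvs pcx"
  assumes X: "is_pcx X"
begin

lemma pcx_pointwise:
  "0 \<le> r \<Longrightarrow> qsubspace (pC X r n) \<and> pd X r n ` pC X r n \<subseteq> pC X r (Suc n) \<and>
     qlinear_on (pC X r n) (pd X r n) \<and> (\<forall>x\<in>pC X r n. pd X r (Suc n) (pd X r n x) = 0) \<and>
     (\<forall>x\<in>pC X r n. pstr X r r n x = x)"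
  using X[unfolded is_pcx_def, THEN conjunct1] by blast

lemma pcx_str_maps:
  "0 \<le> s \<Longrightarrow> s \<le> t \<Longrightarrow> pstr X s t n ` pC X s n \<subseteq> pC X t n \<and>
     qlinear_on (pC X s n) (pstr X s t n) \<and>
     (\<forall>x\<in>pC X s n. pstr X s t (Suc n) (pd X s n x) = pd X t n (pstr X s t n x))"
  using X[unfolded is_pcx_def, THEN conjunct2, THEN conjunct1] by blast

lemma pcx_str_trans:
  "0 \<le> s \<Longrightarrow> s \<le> t \<Longrightarrow> t \<le> u \<Longrightarrow> x \<in> pC X s n \<Longrightarrow> pstr X t u n (pstr X s t n x) = pstr X s u n x"
  using X[unfolded is_pcx_def, THEN conjunct2, THEN conjunct2] by blast

lemma pcx_zero_mem: "0 \<le> r \<Longrightarrow> 0 \<in> pC X r n"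
  using pcx_pointwise unfolding qsubspace_def by blast

lemma pcx_qscale_mem: "0 \<le> r \<Longrightarrow> x \<in> pC X r n \<Longrightarrow> qscale c x \<in> pC X r n"
  using pcx_pointwise unfolding qsubspace_def by blast

lemma pcx_d_mem: "0 \<le> r \<Longrightarrow> x \<in> pC X r n \<Longrightarrow> pd X r n x \<in> pC X r (Suc n)"
  using pcx_pointwise by blast

lemma pcx_d_qlinear: "0 \<le> r \<Longrightarrow> qlinear_on (pC X r n) (pd X r n)"
  using pcx_pointwise by blast

lemma pcx_d_d: "0 \<le> r \<Longrightarrow> x \<in> pC X r n \<Longrightarrow> pd X r (Suc n) (pd X r n x) = 0"
  using pcx_pointwise by blast

lemma pcx_str_refl: "0 \<le> r \<Longrightarrow> x \<in> pC X r n \<Longrightarrow> pstr X r r n x = x"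
  using pcx_pointwise by blast

lemma pcx_str_mem: "0 \<le> s \<Longrightarrow> s \<le> t \<Longrightarrow> x \<in> pC X s n \<Longrightarrow> pstr X s t n x \<in> pC X t n"
  using pcx_str_maps by blast

lemma pcx_str_qlinear: "0 \<le> s \<Longrightarrow> s \<le> t \<Longrightarrow> qlinear_on (pC X s n) (pstr X s t n)"
  using pcx_str_maps by blast

lemma pcx_str_d:
  "0 \<le> s \<Longrightarrow> s \<le> t \<Longrightarrow> x \<in> pC X s n \<Longrightarrow> pstr X s t (Suc n) (pd X s n x) = pd X t n (pstr X s t n x)"
  using pcx_str_maps by blast

end

context
  fixes X :: "'v::qvs pcx" and Y :: "'w::qvs pcx" and g :: "real \<Rightarrow> nat \<Rightarrow> 'v \<Rightarrow> 'w"
  assumes g: "is_pmor X Y g"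
begin

lemma pmor_pointwise:
  "0 \<le> r \<Longrightarrow> g r n ` pC X r n \<subseteq> pC Y r n \<and> qlinear_on (pC X r n) (g r n) \<and>
     (\<forall>x\<in>pC X r n. g r (Suc n) (pd X r n x) = pd Y r n (g r n x))"
  using g[unfolded is_pmor_def, THEN conjunct1] by blast

lemma pmor_mem: "0 \<le> r \<Longrightarrow> x \<in> pC X r n \<Longrightarrow> g r n x \<in> pC Y r n"
  using pmor_pointwise by blast

lemma pmor_qlinear: "0 \<le> r \<Longrightarrow> qlinear_on (pC X r n) (g r n)"
  using pmor_pointwise by blast

lemma pmor_zero: "0 \<le> r \<Longrightarrow> 0 \<in> pC X r n \<Longrightarrow> g r n 0 = 0"
  using pmor_qlinear qlinear_on_zero by blast

lemma pmor_d: "0 \<le> r \<Longrightarrow> x \<in> pC X r n \<Longrightarrow> g r (Suc n) (pd X r n x) = pd Y r n (g r n x)"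
  using pmor_pointwise by blast

lemma pmor_str:
  "0 \<le> s \<Longrightarrow> s \<le> t \<Longrightarrow> x \<in> pC X s n \<Longrightarrow> g t n (pstr X s t n x) = pstr Y s t n (g s n x)"
  using g[unfolded is_pmor_def, THEN conjunct2] by blast

end

lemma is_pmorI:
  assumes "\<And>r n x. 0 \<le> r \<Longrightarrow> x \<in> pC X r n \<Longrightarrow> g r n x \<in> pC Y r n"
    and "\<And>r n. 0 \<le> r \<Longrightarrow> qlinear_on (pC X r n) (g r n)"
    and "\<And>r n x. 0 \<le> r \<Longrightarrow> x \<in> pC X r n \<Longrightarrow> g r (Suc n) (pd X r n x) = pd Y r n (g r n x)"
    and "\<And>s t n x. 0 \<le> s \<Longrightarrow> s \<le> t \<Longrightarrow> x \<in> pC X s n \<Longrightarrow>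
      g t n (pstr X s t n x) = pstr Y s t n (g s n x)"
  shows "is_pmor X Y g"
  unfolding is_pmor_def by (simp add: assms image_subset_iff)

lemma pmor_eq_sym: "pmor_eq A g h \<Longrightarrow> pmor_eq A h g"
  unfolding pmor_eq_def by simp

lemma pmor_eq_trans: "pmor_eq A g h \<Longrightarrow> pmor_eq A h k \<Longrightarrow> pmor_eq A g k"
  unfolding pmor_eq_def by simp

lemma pmor_eqD: "pmor_eq A g h \<Longrightarrow> 0 \<le> r \<Longrightarrow> x \<in> pC A r n \<Longrightarrow> g r n x = h r n x"
  unfolding pmor_eq_def by blast

lemma pcomp_disk_incl [simp]: "pcomp h disk_incl = h"
  by (simp add: pcomp_def disk_incl_def)

lemma pC_disk:
  "pC (disk k s) r m = (if s \<le> r \<and> 1 \<le> k \<and> (m + 1 = k \<or> m = k) then UNIV else {0})"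
  by (simp add: disk_def)

lemma pd_disk [simp]: "pd (disk k s) r m q = (if s \<le> r \<and> m + 1 = k then q else 0)"
  by (simp add: disk_def)

lemma pstr_disk [simp]: "pstr (disk k s) r r' m q = q"
  by (simp add: disk_def)

lemma zero_mem_disk [simp]: "0 \<in> pC (disk k s) r m"
  by (simp add: pC_disk)

lemma one_mem_disk [simp]: "s \<le> r \<Longrightarrow> 1 \<in> pC (disk (Suc n) s) r n"
  by (simp add: pC_disk)

lemma pC_disk_0 [simp]: "pC (disk 0 s) r m = {0}"
  by (simp add: pC_disk)

lemma mem_disk_cases:
  assumes "q \<in> pC (disk (Suc n) s) r m"
  obtains "q = 0" | "s \<le> r" and "m = n" | "s \<le> r" and "m = Suc n"
  using assms by (auto simp: pC_disk split: if_splits)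

lemma is_pmor_disk_0_zero:
  assumes "is_pcx X"
  shows "is_pmor (disk 0 s) X (\<lambda>r m q. 0)"
  by (rule is_pmorI) (simp_all add: qlinear_on_def pcx_zero_mem[OF assms]
      qlinear_on_zero[OF pcx_d_qlinear[OF assms] pcx_zero_mem[OF assms]]
      qlinear_on_zero[OF pcx_str_qlinear[OF assms] pcx_zero_mem[OF assms]])

lemma has_rlp_disk_0:
  assumes X: "is_pcx X" and f: "is_pmor X Y f"
  shows "has_rlp (disk 0 t) (disk 0 s) disk_incl X Y f"
  unfolding has_rlp_def pcomp_disk_incl
proof (intro allI impI, elim conjE)
  fix u v assume u: "is_pmor (disk 0 t) X u" and v: "is_pmor (disk 0 s) Y v"
  have "pmor_eq (disk 0 t) (\<lambda>r m q. 0) u"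
    using pmor_zero[OF u] by (simp add: pmor_eq_def)
  moreover have "pmor_eq (disk 0 s) (pcomp f (\<lambda>r m q. 0)) v"
    using pmor_zero[OF v] pmor_zero[OF f] pcx_zero_mem[OF X] by (simp add: pmor_eq_def pcomp_def)
  ultimately show "\<exists>h. is_pmor (disk 0 s) X h \<and> pmor_eq (disk 0 t) h u \<and>
      pmor_eq (disk 0 s) (pcomp f h) v"
    using is_pmor_disk_0_zero[OF X] by blast
qed

definition disk_mor :: "'v::qvs pcx \<Rightarrow> real \<Rightarrow> nat \<Rightarrow> 'v \<Rightarrow> real \<Rightarrow> nat \<Rightarrow> rat \<Rightarrow> 'v" where
  "disk_mor X s n x = (\<lambda>r m q.
     if m = n then qscale q (pstr X s r n x)
     else if m = Suc n then qscale q (pd X r n (pstr X s r n x)) else 0)"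

lemma disk_mor_zero [simp]: "disk_mor X s n x r m 0 = 0"
  by (simp add: disk_mor_def)

lemma disk_mor_generator: "is_pcx X \<Longrightarrow> 0 \<le> s \<Longrightarrow> x \<in> pC X s n \<Longrightarrow> disk_mor X s n x s n 1 = x"
  by (simp add: disk_mor_def qscale_one pcx_str_refl)

lemma disk_mor_str:
  assumes "is_pcx X" "0 \<le> s" "s \<le> t" "t \<le> r" "x \<in> pC X s n"
  shows "disk_mor X s n x r m q = disk_mor X t n (pstr X s t n x) r m q"
  using pcx_str_trans[OF assms] by (simp add: disk_mor_def)

lemma pmor_eq_disk_mor_str:
  assumes "is_pcx X" "0 \<le> s" "s \<le> t" "x \<in> pC X s n"
  shows "pmor_eq (disk (Suc n) t) (disk_mor X s n x) (disk_mor X t n (pstr X s t n x))"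
  unfolding pmor_eq_def
proof (intro allI impI ballI)
  fix r m q assume "q \<in> pC (disk (Suc n) t) r m"
  then show "disk_mor X s n x r m q = disk_mor X t n (pstr X s t n x) r m q"
    by (cases rule: mem_disk_cases) (simp_all add: disk_mor_str[OF assms(1-3) _ assms(4)])
qed

lemma is_pmor_disk_mor:
  assumes X: "is_pcx X" and s: "0 \<le> s" and x: "x \<in> pC X s n"
  shows "is_pmor (disk (Suc n) s) X (disk_mor X s n x)"
proof -
  have mem: "disk_mor X s n x r m q \<in> pC X r m"
    if r: "0 \<le> r" and q: "q \<in> pC (disk (Suc n) s) r m" for r m q
    using q
  proof (cases rule: mem_disk_cases)
    case 1 then show ?thesis using pcx_zero_mem[OF X r] by simp
  next
    case 2 then show ?thesis
      using pcx_qscale_mem[OF X r pcx_str_mem[OF X s _ x]] by (simp add: disk_mor_def)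
  next
    case 3 then show ?thesis
      using pcx_qscale_mem[OF X r pcx_d_mem[OF X r pcx_str_mem[OF X s _ x]]] by (simp add: disk_mor_def)
  qed
  have d: "disk_mor X s n x r (Suc m) (pd (disk (Suc n) s) r m q) = pd X r m (disk_mor X s n x r m q)"
    if r: "0 \<le> r" and q: "q \<in> pC (disk (Suc n) s) r m" for r m q
    using q
  proof (cases rule: mem_disk_cases)
    case 1 then show ?thesis using qlinear_on_zero[OF pcx_d_qlinear[OF X r] pcx_zero_mem[OF X r]] by simp
  next
    case 2
    then have "pstr X s r n x \<in> pC X r n" using pcx_str_mem[OF X s _ x] by simp
    with 2 show ?thesis using qlinear_on_qscale[OF pcx_d_qlinear[OF X r]] by (simp add: disk_mor_def)
  next
    case 3
    then have p: "pstr X s r n x \<in> pC X r n" using pcx_str_mem[OF X s _ x] by simp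
    with 3 show ?thesis
      using qlinear_on_qscale[OF pcx_d_qlinear[OF X r] pcx_d_mem[OF X r p]] pcx_d_d[OF X r p]
      by (simp add: disk_mor_def)
  qed
  have lin: "qlinear_on A (disk_mor X s n x r m)" for A r m
    unfolding qlinear_on_def disk_mor_def by (auto simp: qscale_add_left qscale_assoc)
  have nat: "disk_mor X s n x t m (pstr (disk (Suc n) s) r t m q) = pstr X r t m (disk_mor X s n x r m q)"
    if r: "0 \<le> r" "r \<le> t" and q: "q \<in> pC (disk (Suc n) s) r m" for r t m q
    using q
  proof (cases rule: mem_disk_cases)
    case 1 then show ?thesis
      using qlinear_on_zero[OF pcx_str_qlinear[OF X r] pcx_zero_mem[OF X r(1)]] by simp
  next
    case 2
    then have "pstr X s r n x \<in> pC X r n" using pcx_str_mem[OF X s _ x] by simp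
    with 2 show ?thesis
      using qlinear_on_qscale[OF pcx_str_qlinear[OF X r]] pcx_str_trans[OF X s _ r(2) x]
      by (simp add: disk_mor_def)
  next
    case 3
    then have p: "pstr X s r n x \<in> pC X r n" using pcx_str_mem[OF X s _ x] by simp
    with 3 show ?thesis
      using qlinear_on_qscale[OF pcx_str_qlinear[OF X r] pcx_d_mem[OF X r(1) p]]
        pcx_str_d[OF X r p] pcx_str_trans[OF X s _ r(2) x]
      by (simp add: disk_mor_def)
  qed
  show ?thesis
    using mem lin d nat by (rule is_pmorI)
qed

lemma pmor_eq_disk_mor:
  assumes X: "is_pcx X" and g: "is_pmor (disk (Suc n) s) X g" and s: "0 \<le> s"
  shows "pmor_eq (disk (Suc n) s) g (disk_mor X s n (g s n 1))"
  unfolding pmor_eq_def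
proof (intro allI impI ballI)
  fix r m q assume r: "0 \<le> r" and q: "q \<in> pC (disk (Suc n) s) r m"
  from q show "g r m q = disk_mor X s n (g s n 1) r m q"
  proof (cases rule: mem_disk_cases)
    case 1 then show ?thesis using pmor_zero[OF g r] by simp
  next
    case 2
    have "g r n q = qscale q (g r n 1)"
      using qlinear_on_qscale[OF pmor_qlinear[OF g r] one_mem_disk[OF \<open>s \<le> r\<close>], of q] by simp
    also have "g r n 1 = pstr X s r n (g s n 1)"
      using pmor_str[OF g s \<open>s \<le> r\<close> one_mem_disk[OF order.refl]] by simp
    finally show ?thesis using 2 by (simp add: disk_mor_def)
  next
    case 3
    have one: "(1::rat) \<in> pC (disk (Suc n) s) r (Suc n)" using \<open>s \<le> r\<close> by (simp add: pC_disk)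
    have "g r (Suc n) q = qscale q (g r (Suc n) 1)"
      using qlinear_on_qscale[OF pmor_qlinear[OF g r] one, of q] by simp
    also have "g r (Suc n) 1 = pd X r n (g r n 1)"
      using pmor_d[OF g r one_mem_disk[OF \<open>s \<le> r\<close>]] \<open>s \<le> r\<close> by simp
    also have "g r n 1 = pstr X s r n (g s n 1)"
      using pmor_str[OF g s \<open>s \<le> r\<close> one_mem_disk[OF order.refl]] by simp
    finally show ?thesis using 3 by (simp add: disk_mor_def)
  qed
qed

lemma pmor_eq_pcomp_disk_mor:
  assumes X: "is_pcx X" and f: "is_pmor X Y f" and s: "0 \<le> s" and x: "x \<in> pC X s n"
  shows "pmor_eq (disk (Suc n) s) (pcomp f (disk_mor X s n x)) (disk_mor Y s n (f s n x))"
  unfolding pmor_eq_def pcomp_def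
proof (intro allI impI ballI)
  fix r m q assume r: "0 \<le> r" and q: "q \<in> pC (disk (Suc n) s) r m"
  from q show "f r m (disk_mor X s n x r m q) = disk_mor Y s n (f s n x) r m q"
  proof (cases rule: mem_disk_cases)
    case 1 then show ?thesis using pmor_zero[OF f r pcx_zero_mem[OF X r]] by simp
  next
    case 2
    then have "pstr X s r n x \<in> pC X r n" using pcx_str_mem[OF X s _ x] by simp
    with 2 show ?thesis
      using qlinear_on_qscale[OF pmor_qlinear[OF f r]] pmor_str[OF f s _ x] by (simp add: disk_mor_def)
  next
    case 3
    then have p: "pstr X s r n x \<in> pC X r n" using pcx_str_mem[OF X s _ x] by simp
    with 3 show ?thesis
      using qlinear_on_qscale[OF pmor_qlinear[OF f r] pcx_d_mem[OF X r p]] pmor_d[OF f r p]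
        pmor_str[OF f s _ x]
      by (simp add: disk_mor_def)
  qed
qed

definition pullback_map_surj ::
  "'v::qvs pcx \<Rightarrow> 'w::qvs pcx \<Rightarrow> (real \<Rightarrow> nat \<Rightarrow> 'v \<Rightarrow> 'w) \<Rightarrow> real \<Rightarrow> real \<Rightarrow> nat \<Rightarrow> bool" where
  "pullback_map_surj X Y f s t n \<longleftrightarrow>
     (\<forall>a\<in>pC X t n. \<forall>b\<in>pC Y s n. f t n a = pstr Y s t n b \<longrightarrow>
        (\<exists>x\<in>pC X s n. pstr X s t n x = a \<and> f s n x = b))"

lemma pullback_map_surj_refl:
  assumes X: "is_pcx X" and Y: "is_pcx Y" and s: "0 \<le> s"
  shows "pullback_map_surj X Y f s s n"
  unfolding pullback_map_surj_def
proof (intro ballI impI)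
  fix a b assume a: "a \<in> pC X s n" and b: "b \<in> pC Y s n" and "f s n a = pstr Y s s n b"
  then show "\<exists>x\<in>pC X s n. pstr X s s n x = a \<and> f s n x = b"
    using pcx_str_refl[OF X s a] pcx_str_refl[OF Y s b] by auto
qed

lemma has_rlp_disk_imp_pullback_map_surj:
  assumes X: "is_pcx X" and Y: "is_pcx Y" and f: "is_pmor X Y f" and st: "0 \<le> s" "s \<le> t"
    and rlp: "has_rlp (disk (Suc n) t) (disk (Suc n) s) disk_incl X Y f"
  shows "pullback_map_surj X Y f s t n"
  unfolding pullback_map_surj_def
proof (intro ballI impI)
  fix a b assume a: "a \<in> pC X t n" and b: "b \<in> pC Y s n" and ab: "f t n a = pstr Y s t n b"
  have t: "0 \<le> t" using st by simp
  let ?u = "disk_mor X t n a" and ?v = "disk_mor Y s n b"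
  have "pmor_eq (disk (Suc n) t) (pcomp f ?u) (disk_mor Y t n (pstr Y s t n b))"
    using pmor_eq_pcomp_disk_mor[OF X f t a] ab by simp
  then have "pmor_eq (disk (Suc n) t) (pcomp f ?u) ?v"
    using pmor_eq_trans pmor_eq_sym[OF pmor_eq_disk_mor_str[OF Y st b]] by blast
  then obtain h where h: "is_pmor (disk (Suc n) s) X h"
    and hu: "pmor_eq (disk (Suc n) t) h ?u" and hv: "pmor_eq (disk (Suc n) s) (pcomp f h) ?v"
    using rlp[unfolded has_rlp_def pcomp_disk_incl, rule_format]
      is_pmor_disk_mor[OF X t a] is_pmor_disk_mor[OF Y st(1) b] by blast
  have "pstr X s t n (h s n 1) = h t n 1"
    using pmor_str[OF h st one_mem_disk[OF order.refl]] by simp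
  also have "\<dots> = a"
    using pmor_eqD[OF hu t one_mem_disk[OF order.refl]] disk_mor_generator[OF X t a] by simp
  finally have "pstr X s t n (h s n 1) = a" .
  moreover have "f s n (h s n 1) = b"
    using pmor_eqD[OF hv st(1) one_mem_disk[OF order.refl]] disk_mor_generator[OF Y st(1) b]
    by (simp add: pcomp_def)
  moreover have "h s n 1 \<in> pC X s n"
    using pmor_mem[OF h st(1) one_mem_disk[OF order.refl]] .
  ultimately show "\<exists>x\<in>pC X s n. pstr X s t n x = a \<and> f s n x = b" by blast
qed

lemma pullback_map_surj_imp_has_rlp_disk:
  assumes X: "is_pcx X" and Y: "is_pcx Y" and f: "is_pmor X Y f" and st: "0 \<le> s" "s \<le> t"
    and surj: "pullback_map_surj X Y f s t n"
  shows "has_rlp (disk (Suc n) t) (disk (Suc n) s) disk_incl X Y f"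
  unfolding has_rlp_def pcomp_disk_incl
proof (intro allI impI, elim conjE)
  fix u v assume u: "is_pmor (disk (Suc n) t) X u" and v: "is_pmor (disk (Suc n) s) Y v"
    and uv: "pmor_eq (disk (Suc n) t) (pcomp f u) v"
  have t: "0 \<le> t" using st by simp
  have a: "u t n 1 \<in> pC X t n" and b: "v s n 1 \<in> pC Y s n"
    using pmor_mem[OF u t] pmor_mem[OF v st(1)] by simp_all
  have "f t n (u t n 1) = v t n 1"
    using pmor_eqD[OF uv t one_mem_disk[OF order.refl]] by (simp add: pcomp_def)
  also have "\<dots> = pstr Y s t n (v s n 1)"
    using pmor_str[OF v st one_mem_disk[OF order.refl]] by simp
  finally obtain x where x: "x \<in> pC X s n"
    and xu: "pstr X s t n x = u t n 1" and xv: "f s n x = v s n 1"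
    using surj a b unfolding pullback_map_surj_def by blast
  have "pmor_eq (disk (Suc n) t) (disk_mor X t n (pstr X s t n x)) u"
    using pmor_eq_sym[OF pmor_eq_disk_mor[OF X u t]] by (simp add: xu)
  with pmor_eq_disk_mor_str[OF X st x] have "pmor_eq (disk (Suc n) t) (disk_mor X s n x) u"
    by (rule pmor_eq_trans)
  moreover have "pmor_eq (disk (Suc n) s) (disk_mor Y s n (f s n x)) v"
    using pmor_eq_sym[OF pmor_eq_disk_mor[OF Y v st(1)]] by (simp add: xv)
  with pmor_eq_pcomp_disk_mor[OF X f st(1) x]
  have "pmor_eq (disk (Suc n) s) (pcomp f (disk_mor X s n x)) v"
    by (rule pmor_eq_trans)
  ultimately show "\<exists>h. is_pmor (disk (Suc n) s) X h \<and> pmor_eq (disk (Suc n) t) h u \<and>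
      pmor_eq (disk (Suc n) s) (pcomp f h) v"
    using is_pmor_disk_mor[OF X st(1) x] by blast
qed

lemma has_rlp_disk_iff_pullback_map_surj:
  assumes "is_pcx X" "is_pcx Y" "is_pmor X Y f"
  shows "0 \<le> s \<Longrightarrow> s \<le> t \<Longrightarrow>
    has_rlp (disk (Suc n) t) (disk (Suc n) s) disk_incl X Y f \<longleftrightarrow> pullback_map_surj X Y f s t n"
  using has_rlp_disk_imp_pullback_map_surj[OF assms] pullback_map_surj_imp_has_rlp_disk[OF assms]
  by blast

theorem mainTheorem5:
  fixes X :: "'v::qvs pcx" and Y :: "'w::qvs pcx" and f :: "real \<Rightarrow> nat \<Rightarrow> 'v \<Rightarrow> 'w"
  assumes "is_pcx X" and "is_pcx Y" and "is_pmor X Y f"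
  shows "(\<forall>k s t. 0 \<le> s \<and> s < t \<longrightarrow> has_rlp (disk k t) (disk k s) disk_incl X Y f)
     \<longleftrightarrow> (\<forall>s t n. 0 \<le> s \<and> s \<le> t \<longrightarrow>
           (\<forall>a\<in>pC X t n. \<forall>b\<in>pC Y s n. f t n a = pstr Y s t n b \<longrightarrow>
              (\<exists>x\<in>pC X s n. pstr X s t n x = a \<and> f s n x = b)))"
proof -
  note rlp_iff = has_rlp_disk_iff_pullback_map_surj[OF assms]
  have "(\<forall>k s t. 0 \<le> s \<and> s < t \<longrightarrow> has_rlp (disk k t) (disk k s) disk_incl X Y f)
      \<longleftrightarrow> (\<forall>s t n. 0 \<le> s \<and> s < t \<longrightarrow> pullback_map_surj X Y f s t n)"
  proof (intro iffI allI impI)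
    fix s t :: real and n
    assume "\<forall>k s t. 0 \<le> s \<and> s < t \<longrightarrow> has_rlp (disk k t) (disk k s) disk_incl X Y f"
      and st: "0 \<le> s \<and> s < t"
    then have "has_rlp (disk (Suc n) t) (disk (Suc n) s) disk_incl X Y f" by blast
    with st show "pullback_map_surj X Y f s t n" by (simp add: rlp_iff)
  next
    fix k and s t :: real
    assume "\<forall>s t n. 0 \<le> s \<and> s < t \<longrightarrow> pullback_map_surj X Y f s t n" and "0 \<le> s \<and> s < t"
    then show "has_rlp (disk k t) (disk k s) disk_incl X Y f"
      using has_rlp_disk_0[OF assms(1,3)] rlp_iff by (cases k) auto
  qed
  also have "\<dots> \<longleftrightarrow> (\<forall>s t n. 0 \<le> s \<and> s \<le> t \<longrightarrow> pullback_map_surj X Y f s t n)"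
    using pullback_map_surj_refl[OF assms(1,2)] by (auto simp: order.order_iff_strict)
  finally show ?thesis
    unfolding pullback_map_surj_def .
qed

end
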